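(* There is an absolute constant $\kappa_1>0$ such that for every constant $C_0>0$ there is $R_0$ with the following property. Let $R\ge R_0$, let $q\in\mathbb{R}$ with $0<|q|\le C_0$, and let $S,T\subset[0,R^{-1/5}]$ be arbitrary finite sets of $\frac1{\sqrt R}$-separated points (i.e. distinct points of $S$ are at distance $\ge R^{-1/2}$, and likewise for $T$). Then $$\Big|\sum_{s\in S,\,t\in T}e^{iR(st+qs^2t^2)}\Big|<R^{\frac35-\kappa_1}|q|^{-1}.$$ *)

theory Defs
  imports "HOL-Analysis.Analysis"
begin

definition separated :: "real \<Rightarrow> real set \<Rightarrow> bool" where
  "separated d A \<longleftrightarrow> (\<forall>x\<in>A. \<forall>y\<in>A. x \<noteq> y \<longrightarrow> \<bar>x - y\<bar> \<ge> d)"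

end

theory Submission
  imports Defs "HOL-Real_Asymp.Real_Asymp"
begin

text \<open>
  Two applications of Cauchy--Schwarz bound the fourth power of the sum by |S|^2 |T|^2 times a
  bilinear sum over pairs, with phases u(s, s') v(t, t') where u = (s - s', s^2 - s'^2) and
  v = R (t - t', q (t^2 - t'^2)).  Rounding u and v to grids whose steps multiply to 2 pi / P
  changes that sum by O(|S|^2 |T|^2 / K) and turns it into a sum of P-th roots of unity, which
  Cauchy--Schwarz and orthogonality bound by (P1 P2 E(S) E(T))^(1/2).  Here E(A) counts quadruples
  of A with x1 - x2 close to x3 - x4 and x1^2 - x2^2 close to x3^2 - x4^2; fixing x1 and x4 pins
  down x2 + x3 and (x2 - x3)^2, so for separated points E(A) is essentially |A|^2 away from the
  diagonal x1 = x4.  With the scales fixed below this saves a power of R as soon as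
  |q| >= R^(-1/1000) / 5, and for smaller |q| the trivial bound |S| |T| = O(R^(3/5)) suffices.
\<close>

section \<open>Exponential sums and Cauchy--Schwarz\<close>

lemma norm_cis_diff_le: "norm (cis a - cis b) \<le> \<bar>a - b\<bar>"
proof -
  have "norm (cis (a - b) - 1) = 2 * \<bar>sin ((a - b) / 2)\<bar>"
    using dist_exp_i_1[of "a - b"] by (simp add: cis_conv_exp)
  also have "\<dots> \<le> \<bar>a - b\<bar>"
    using abs_sin_x_le_abs_x[of "(a - b) / 2"] by simp
  finally have "norm (cis (a - b) - 1) \<le> \<bar>a - b\<bar>" .
  moreover have "cis a - cis b = cis b * (cis (a - b) - 1)"
    by (simp add: algebra_simps cis_mult)
  ultimately show ?thesis
    by (simp add: norm_mult)
qed

lemma sum_cis_roots_of_unity: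
  fixes d :: int
  assumes "P > 0"
  shows "(\<Sum>r<P. cis (2 * pi * real r * of_int d / real P)) = (if int P dvd d then of_nat P else 0)"
proof -
  define w where "w = cis (2 * pi * of_int d / real P)"
  have powers: "cis (2 * pi * real r * of_int d / real P) = w ^ r" for r
    using Complex.DeMoivre[of "2 * pi * of_int d / real P" r] by (simp add: w_def field_simps)
  show ?thesis
  proof (cases "int P dvd d")
    case True
    then obtain k where "d = int P * k" by blast
    hence "2 * pi * of_int d / real P = 2 * pi * of_int k" using assms by simp
    hence "w = cis (2 * pi * of_int k)" unfolding w_def by (simp only:)
    also have "\<dots> = 1" by (rule cis_multiple_2pi) simp
    finally have "w = 1" .
    thus ?thesis using True unfolding powers by simp
  next
    case False
    have "w \<noteq> 1"
    proof
      assume "w = 1"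
      then obtain k :: int where "2 * pi * of_int d / real P = 2 * pi * of_int k"
        by (auto simp: w_def complex_eq_iff cos_one_2pi_int)
      hence "of_int d = real P * of_int k" using assms by (simp add: field_simps)
      hence "d = int P * k" by (metis of_int_eq_iff of_int_mult of_int_of_nat_eq)
      thus False using False by auto
    qed
    moreover have "w ^ P = 1"
    proof -
      have "w ^ P = cis (2 * pi * of_int d)"
        using Complex.DeMoivre[of "2 * pi * of_int d / real P" P] assms by (simp add: w_def)
      also have "\<dots> = 1" by (rule cis_multiple_2pi) simp
      finally show ?thesis .
    qed
    ultimately have "(\<Sum>r<P. w ^ r) = 0" by (simp add: geometric_sum)
    thus ?thesis using False by (simp add: powers)
  qed
qed

lemma norm_sum_squared_le: "(norm (\<Sum>i\<in>I. x i))\<^sup>2 \<le> real (card I) * (\<Sum>i\<in>I. (norm (x i))\<^sup>2)"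
proof -
  have "(norm (\<Sum>i\<in>I. x i))\<^sup>2 \<le> (\<Sum>i\<in>I. norm (x i))\<^sup>2"
    by (simp add: norm_sum power_mono)
  also have "\<dots> \<le> (\<Sum>i\<in>I. (norm (x i))\<^sup>2) * real (card I)"
    by (rule sum_squared_le_sum_of_squares)
  finally show ?thesis by (simp add: mult.commute)
qed

lemma sum_norm_sum_squared:
  fixes c :: "'a \<Rightarrow> 'b \<Rightarrow> complex"
  shows "(\<Sum>s\<in>S. (norm (\<Sum>t\<in>T. c s t))\<^sup>2) = norm (\<Sum>t\<in>T. \<Sum>t'\<in>T. \<Sum>s\<in>S. c s t * cnj (c s t'))"
proof -
  have "of_real (\<Sum>s\<in>S. (norm (\<Sum>t\<in>T. c s t))\<^sup>2) = (\<Sum>t\<in>T. \<Sum>t'\<in>T. \<Sum>s\<in>S. c s t * cnj (c s t'))"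
    unfolding of_real_sum complex_norm_square cnj_sum sum_product by (simp add: sum.swap[of _ S])
  moreover have "norm (complex_of_real (\<Sum>s\<in>S. (norm (\<Sum>t\<in>T. c s t))\<^sup>2)) = (\<Sum>s\<in>S. (norm (\<Sum>t\<in>T. c s t))\<^sup>2)"
    by (simp only: norm_of_real) (simp add: sum_nonneg)
  ultimately show ?thesis by simp
qed

lemma norm_double_sum_pow4_le:
  fixes c :: "'a \<Rightarrow> 'b \<Rightarrow> complex"
  assumes "finite T"
  shows "(norm (\<Sum>s\<in>S. \<Sum>t\<in>T. c s t))^4 \<le> (real (card S))\<^sup>2 * (real (card T))\<^sup>2 *
     norm (\<Sum>s\<in>S. \<Sum>s'\<in>S. \<Sum>t\<in>T. \<Sum>t'\<in>T. c s t * cnj (c s t') * cnj (c s' t) * c s' t')"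
    (is "_ \<le> _ * norm ?Q")
proof -
  define A where "A p = (\<Sum>s\<in>S. c s (fst p) * cnj (c s (snd p)))" for p
  have "(norm (\<Sum>s\<in>S. \<Sum>t\<in>T. c s t))\<^sup>2 \<le> real (card S) * (\<Sum>s\<in>S. (norm (\<Sum>t\<in>T. c s t))\<^sup>2)"
    by (rule norm_sum_squared_le)
  also have "(\<Sum>s\<in>S. (norm (\<Sum>t\<in>T. c s t))\<^sup>2) = norm (\<Sum>t\<in>T. \<Sum>t'\<in>T. A (t, t'))"
    by (simp add: sum_norm_sum_squared A_def)
  also have "\<dots> = norm (\<Sum>p\<in>T \<times> T. A p)"
    by (simp add: sum.cartesian_product)
  finally have first: "(norm (\<Sum>s\<in>S. \<Sum>t\<in>T. c s t))\<^sup>2 \<le> real (card S) * norm (\<Sum>p\<in>T \<times> T. A p)" .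
  have "(norm (\<Sum>p\<in>T \<times> T. A p))\<^sup>2 \<le> (real (card T))\<^sup>2 * (\<Sum>p\<in>T \<times> T. (norm (A p))\<^sup>2)"
    using norm_sum_squared_le[of A "T \<times> T"] assms by (simp add: card_cartesian_product power2_eq_square)
  also have "(\<Sum>p\<in>T \<times> T. (norm (A p))\<^sup>2) = norm ?Q"
    unfolding A_def sum_norm_sum_squared
    by (simp add: sum.cartesian_product case_prod_unfold mult_ac)
  finally have second: "(norm (\<Sum>p\<in>T \<times> T. A p))\<^sup>2 \<le> (real (card T))\<^sup>2 * norm ?Q" .
  have "(norm (\<Sum>s\<in>S. \<Sum>t\<in>T. c s t))^4 \<le> (real (card S) * norm (\<Sum>p\<in>T \<times> T. A p))\<^sup>2"
    using power_mono[OF first, of 2] by (simp flip: power_mult)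
  also have "\<dots> \<le> (real (card S))\<^sup>2 * ((real (card T))\<^sup>2 * norm ?Q)"
    using second by (simp add: power_mult_distrib mult_left_mono)
  finally show ?thesis by (simp add: mult_ac)
qed

section \<open>Sums of roots of unity over a lattice\<close>

lemma norm_sum_comp_squared_le:
  fixes g :: "'i \<Rightarrow> 'r" and F :: "'r \<Rightarrow> complex"
  assumes "finite I" "finite B" "g ` I \<subseteq> B"
  shows "(norm (\<Sum>i\<in>I. F (g i)))\<^sup>2 \<le> real (card {(i, i') \<in> I \<times> I. g i = g i'}) * (\<Sum>r\<in>B. (norm (F r))\<^sup>2)"
proof -
  define c where "c r = card {i \<in> I. g i = r}" for r
  have "(\<Sum>i\<in>I. F (g i)) = (\<Sum>r\<in>B. \<Sum>i\<in>{i \<in> I. g i = r}. F (g i))"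
    by (rule sum.group[OF assms, symmetric])
  also have "\<dots> = (\<Sum>r\<in>B. of_nat (c r) * F r)"
    by (intro sum.cong refl) (simp add: c_def)
  finally have "norm (\<Sum>i\<in>I. F (g i)) \<le> (\<Sum>r\<in>B. real (c r) * norm (F r))"
    by (simp only:) (rule order_trans[OF norm_sum], simp add: norm_mult)
  hence "(norm (\<Sum>i\<in>I. F (g i)))\<^sup>2 \<le> (\<Sum>r\<in>B. real (c r) * norm (F r))\<^sup>2"
    by (simp add: power_mono)
  also have "\<dots> \<le> (\<Sum>r\<in>B. (real (c r))\<^sup>2) * (\<Sum>r\<in>B. (norm (F r))\<^sup>2)"
    by (rule Cauchy_Schwarz_ineq_sum)
  also have "(\<Sum>r\<in>B. (real (c r))\<^sup>2) = real (card {(i, i') \<in> I \<times> I. g i = g i'})"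
  proof -
    have "(\<Sum>r\<in>B. (real (c r))\<^sup>2) = (\<Sum>r\<in>B. \<Sum>i\<in>{i \<in> I. g i = r}. real (c (g i)))"
      by (simp add: c_def power2_eq_square)
    also have "\<dots> = (\<Sum>i\<in>I. real (card {i' \<in> I. g i = g i'}))"
      using sum.group[OF assms] by (simp add: c_def eq_commute)
    also have "\<dots> = real (card (SIGMA i:I. {i' \<in> I. g i = g i'}))"
      using assms(1) by (simp add: card_SigmaI)
    also have "(SIGMA i:I. {i' \<in> I. g i = g i'}) = {(i, i') \<in> I \<times> I. g i = g i'}"
      by auto
    finally show ?thesis .
  qed
  finally show ?thesis .
qed

lemma sum_norm_squared_cis_character_sum:
  fixes n1 n2 :: "'j \<Rightarrow> int"
  assumes "finite J" "P1 > 0" "P2 > 0"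
  shows "(\<Sum>r\<in>{..<P1} \<times> {..<P2}.
      (norm (\<Sum>j\<in>J. cis (2 * pi * (real (fst r) * of_int (n1 j) / P1 + real (snd r) * of_int (n2 j) / P2))))\<^sup>2)
    = real P1 * real P2 *
      real (card {(j, j') \<in> J \<times> J. n1 j mod int P1 = n1 j' mod int P1 \<and> n2 j mod int P2 = n2 j' mod int P2})"
  (is "?lhs = _ * _ * real (card ?D)")
proof -
  define e where "e P d r = cis (2 * pi * real r * of_int d / real P)" for P :: nat and d :: int and r :: nat
  have "of_real ?lhs = (\<Sum>r\<in>{..<P1} \<times> {..<P2}. \<Sum>j\<in>J. \<Sum>j'\<in>J.
      e P1 (n1 j - n1 j') (fst r) * e P2 (n2 j - n2 j') (snd r))"
    unfolding of_real_sum complex_norm_square cnj_sum sum_product cis_cnj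
    by (intro sum.cong refl) (simp add: e_def cis_mult diff_divide_distrib algebra_simps)
  also have "\<dots> = (\<Sum>j\<in>J. \<Sum>j'\<in>J. \<Sum>r\<in>{..<P1} \<times> {..<P2}.
      e P1 (n1 j - n1 j') (fst r) * e P2 (n2 j - n2 j') (snd r))"
    by (simp add: sum.swap[of _ "{..<P1} \<times> {..<P2}"] sum.swap[of _ "{..<P1} \<times> {..<P2}" J])
  also have "\<dots> = (\<Sum>j\<in>J. \<Sum>j'\<in>J. (\<Sum>r<P1. e P1 (n1 j - n1 j') r) * (\<Sum>r<P2. e P2 (n2 j - n2 j') r))"
    unfolding sum_product sum.cartesian_product by (simp add: case_prod_unfold)
  also have "\<dots> = (\<Sum>j\<in>J. \<Sum>j'\<in>J. if (j, j') \<in> ?D then of_nat (P1 * P2) else 0)"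
    unfolding e_def sum_cis_roots_of_unity[OF assms(2)] sum_cis_roots_of_unity[OF assms(3)]
    by (intro sum.cong refl) (auto simp: mod_eq_dvd_iff)
  also have "\<dots> = (\<Sum>p\<in>J \<times> J. if p \<in> ?D then of_nat (P1 * P2) else 0)"
    by (simp only: sum.cartesian_product case_prod_unfold prod.collapse)
  also have "\<dots> = (\<Sum>p\<in>J \<times> J \<inter> ?D. of_nat (P1 * P2))"
    by (rule sum.inter_restrict[symmetric]) (use assms(1) in simp)
  also have "J \<times> J \<inter> ?D = ?D"
    by blast
  also have "(\<Sum>p\<in>?D. of_nat (P1 * P2)) = of_nat (P1 * P2) * (of_nat (card ?D) :: complex)"
    by simp
  finally have "(of_real ?lhs :: complex) = of_real (real P1 * real P2 * real (card ?D))"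
    by simp
  thus ?thesis by (simp only: of_real_eq_iff)
qed

lemma cis_add_two_pi_int: "cis (x + 2 * pi * of_int k) = cis x"
  by (simp add: cis_mult[symmetric])

lemma of_int_div_mod_split:
  assumes "P > 0"
  shows "of_int (m * n) / real P = of_int (m mod int P) * of_int n / real P + of_int (m div int P * n)"
proof -
  have "real_of_int m = of_int (m mod int P) + real P * of_int (m div int P)"
    by (metis mod_mult_div_eq of_int_add of_int_mult of_int_of_nat_eq add.commute)
  thus ?thesis using assms by (simp add: field_simps)
qed

lemma norm_lattice_cis_sum_squared_le:
  fixes m1 m2 :: "'i \<Rightarrow> int" and n1 n2 :: "'j \<Rightarrow> int"
  assumes "finite I" "finite J" "P1 > 0" "P2 > 0"
  shows "(norm (\<Sum>i\<in>I. \<Sum>j\<in>J. cis (2 * pi * (of_int (m1 i * n1 j) / P1 + of_int (m2 i * n2 j) / P2))))\<^sup>2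
    \<le> real (card {(i, i') \<in> I \<times> I. m1 i mod int P1 = m1 i' mod int P1 \<and> m2 i mod int P2 = m2 i' mod int P2})
      * (real P1 * real P2)
      * real (card {(j, j') \<in> J \<times> J. n1 j mod int P1 = n1 j' mod int P1 \<and> n2 j mod int P2 = n2 j' mod int P2})"
proof -
  define g where "g i = (nat (m1 i mod int P1), nat (m2 i mod int P2))" for i
  define F where "F r = (\<Sum>j\<in>J. cis (2 * pi * (real (fst r) * of_int (n1 j) / P1 + real (snd r) * of_int (n2 j) / P2)))"
    for r :: "nat \<times> nat"
  have reduce: "(\<Sum>j\<in>J. cis (2 * pi * (of_int (m1 i * n1 j) / P1 + of_int (m2 i * n2 j) / P2))) = F (g i)" for i
    unfolding F_def
  proof (rule sum.cong[OF refl])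
    fix j
    have "2 * pi * (of_int (m1 i * n1 j) / P1 + of_int (m2 i * n2 j) / P2) =
        2 * pi * (real (fst (g i)) * of_int (n1 j) / P1 + real (snd (g i)) * of_int (n2 j) / P2)
        + 2 * pi * of_int (m1 i div int P1 * n1 j + m2 i div int P2 * n2 j)"
      unfolding of_int_div_mod_split[OF assms(3)] of_int_div_mod_split[OF assms(4)]
      using assms(3,4) by (simp add: g_def algebra_simps)
    thus "cis (2 * pi * (of_int (m1 i * n1 j) / P1 + of_int (m2 i * n2 j) / P2)) =
        cis (2 * pi * (real (fst (g i)) * of_int (n1 j) / P1 + real (snd (g i)) * of_int (n2 j) / P2))"
      by (simp only: cis_add_two_pi_int)
  qed
  have "(norm (\<Sum>i\<in>I. \<Sum>j\<in>J. cis (2 * pi * (of_int (m1 i * n1 j) / P1 + of_int (m2 i * n2 j) / P2))))\<^sup>2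
      \<le> real (card {(i, i') \<in> I \<times> I. g i = g i'}) * (\<Sum>r\<in>{..<P1} \<times> {..<P2}. (norm (F r))\<^sup>2)"
  proof -
    have "g ` I \<subseteq> {..<P1} \<times> {..<P2}"
      using assms(3,4) by (auto simp: g_def nat_less_iff)
    thus ?thesis using norm_sum_comp_squared_le[of I "{..<P1} \<times> {..<P2}" g F] reduce assms(1)
      by simp
  qed
  moreover have "g i = g i' \<longleftrightarrow> m1 i mod int P1 = m1 i' mod int P1 \<and> m2 i mod int P2 = m2 i' mod int P2" for i i'
    using assms(3,4) by (simp add: g_def eq_nat_nat_iff)
  ultimately show ?thesis
    using sum_norm_squared_cis_character_sum[OF assms(2-4), of n1 n2] by (simp add: F_def mult_ac)
qed

section \<open>Rounding a bilinear phase to a grid\<close>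

lemma abs_sub_mult_round_le:
  assumes "h > 0"
  shows "\<bar>x - h * of_int (round (x / h))\<bar> \<le> h / 2"
proof -
  have "\<bar>x - h * of_int (round (x / h))\<bar> = h * \<bar>of_int (round (x / h)) - x / h\<bar>"
    using assms by (simp add: abs_mult_pos' algebra_simps abs_minus_commute flip: abs_mult)
  also have "\<dots> \<le> h * (1 / 2)"
    using assms of_int_round_abs_le[of "x / h"] by (intro mult_left_mono) auto
  finally show ?thesis by simp
qed

lemma round_mod_eq_imp_close:
  fixes P :: nat
  assumes "h > 0" "\<bar>u\<bar> \<le> A" "\<bar>u'\<bar> \<le> A" "2 * A / h + 1 < real P"
    and "round (u / h) mod int P = round (u' / h) mod int P"
  shows "\<bar>u - u'\<bar> \<le> h"
proof -
  define m m' where "m = round (u / h)" and "m' = round (u' / h)"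
  have "\<bar>of_int m - u / h\<bar> \<le> 1/2" "\<bar>of_int m' - u' / h\<bar> \<le> 1/2"
    unfolding m_def m'_def by (rule of_int_round_abs_le)+
  moreover have "\<bar>u / h\<bar> \<le> A / h" "\<bar>u' / h\<bar> \<le> A / h"
    using assms(1-3) by (simp_all add: abs_divide divide_right_mono)
  ultimately have small: "\<bar>of_int (m - m') :: real\<bar> < real P"
    using assms(4) by (simp add: abs_le_iff; linarith)
  have "m = m'"
  proof (rule ccontr)
    assume "m \<noteq> m'"
    moreover have "int P dvd m - m'"
      using assms(5) by (simp add: m_def m'_def mod_eq_dvd_iff)
    ultimately have "\<bar>int P\<bar> \<le> \<bar>m - m'\<bar>" by (intro dvd_imp_le_int) auto
    hence "real P \<le> \<bar>of_int (m - m') :: real\<bar>"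
      by (metis of_int_abs of_int_le_iff of_int_of_nat_eq abs_of_nat)
    thus False using small by simp
  qed
  hence "\<bar>u / h - u' / h\<bar> \<le> 1"
    using \<open>\<bar>of_int m - u / h\<bar> \<le> 1/2\<close> \<open>\<bar>of_int m' - u' / h\<bar> \<le> 1/2\<close> by (simp add: abs_le_iff; linarith)
  thus ?thesis
    using assms(1) by (simp add: abs_divide field_simps flip: diff_divide_distrib)
qed

lemma abs_mult_sub_mult_le:
  fixes u v a b h g :: real
  assumes "\<bar>u - a\<bar> \<le> h / 2" "\<bar>v - b\<bar> \<le> g / 2"
  shows "\<bar>u * v - a * b\<bar> \<le> h / 2 * \<bar>v\<bar> + (\<bar>u\<bar> + h / 2) * (g / 2)"
proof -
  have "u * v - a * b = (u - a) * v + a * (v - b)"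
    by (simp add: algebra_simps)
  hence "\<bar>u * v - a * b\<bar> \<le> \<bar>u - a\<bar> * \<bar>v\<bar> + \<bar>a\<bar> * \<bar>v - b\<bar>"
    by (metis abs_mult abs_triangle_ineq)
  also have "\<dots> \<le> h / 2 * \<bar>v\<bar> + (\<bar>u\<bar> + h / 2) * (g / 2)"
  proof (rule add_mono)
    show "\<bar>u - a\<bar> * \<bar>v\<bar> \<le> h / 2 * \<bar>v\<bar>"
      using assms(1) by (rule mult_right_mono) simp
    have "\<bar>a\<bar> \<le> \<bar>u\<bar> + h / 2"
      using assms(1) by (simp add: abs_le_iff; linarith)
    thus "\<bar>a\<bar> * \<bar>v - b\<bar> \<le> (\<bar>u\<bar> + h / 2) * (g / 2)"
      using assms(2) by (intro mult_mono) auto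
  qed
  finally show ?thesis .
qed

text \<open>
  Rounding u to u_step * m and v to v_step * n, where u_step * v_step = 2 pi / modulus, replaces
  the phase u v by 2 pi m n / modulus.  The modulus exceeds the number of grid points in the
  ranges of u and v, so the residues of m and n modulo it determine the rounded values.
\<close>
locale rounding_grid =
  fixes \<sigma> X K :: real
  assumes sigma_pos: "\<sigma> > 0" and K_ge_1: "K \<ge> 1" and XK_ge_1: "X * K \<ge> 1"
begin

definition modulus :: nat where
  "modulus = nat \<lceil>2 * pi * X * K\<^sup>2\<rceil> + 2"

definition v_step :: real where
  "v_step = 1 / (\<sigma> * K)"

definition u_step :: real where
  "u_step = 2 * pi / (real modulus * v_step)"

lemma X_pos: "X > 0"
proof (rule ccontr)
  assume "\<not> X > 0"
  hence "X * K \<le> 0" using K_ge_1 by (simp add: mult_nonpos_nonneg)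
  thus False using XK_ge_1 by linarith
qed

lemma XK2_ge: "X * K\<^sup>2 \<ge> K"
  using XK_ge_1 K_ge_1 mult_right_mono[OF XK_ge_1, of K] by (simp add: power2_eq_square mult.assoc)

lemma modulus_ge: "2 * pi * X * K\<^sup>2 + 2 \<le> real modulus"
  and modulus_le: "real modulus \<le> 2 * pi * X * K\<^sup>2 + 3"
proof -
  have "0 \<le> 2 * pi * X * K\<^sup>2" using X_pos by simp
  thus "2 * pi * X * K\<^sup>2 + 2 \<le> real modulus" "real modulus \<le> 2 * pi * X * K\<^sup>2 + 3"
    unfolding modulus_def using le_of_int_ceiling[of "2 * pi * X * K\<^sup>2"] ceiling_correct[of "2 * pi * X * K\<^sup>2"]
    by linarith+
qed

lemma modulus_pos: "modulus > 0"
  by (simp add: modulus_def)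

lemma v_step_pos: "v_step > 0"
  using sigma_pos K_ge_1 by (simp add: v_step_def)

lemma u_step_pos: "u_step > 0"
  using v_step_pos modulus_pos by (simp add: u_step_def)

lemma u_step_eq: "u_step = 2 * pi * \<sigma> * K / real modulus"
  using sigma_pos K_ge_1 modulus_pos by (simp add: u_step_def v_step_def field_simps)

lemma u_step_le: "u_step \<le> \<sigma> / (X * K)"
proof -
  have "2 * pi * \<sigma> * K * (X * K) = \<sigma> * (2 * pi * X * K\<^sup>2)"
    by (simp add: power2_eq_square mult_ac)
  also have "\<dots> \<le> \<sigma> * real modulus"
    using modulus_ge sigma_pos by (intro mult_left_mono) auto
  finally show ?thesis
    unfolding u_step_eq using modulus_pos X_pos K_ge_1 sigma_pos by (simp add: field_simps)
qed

lemma u_range_lt_modulus: "2 * \<sigma> / u_step + 1 < real modulus"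
proof -
  have "2 * \<sigma> / u_step = real modulus / (pi * K)"
    unfolding u_step_eq using sigma_pos K_ge_1 modulus_pos by (simp add: field_simps)
  also have "\<dots> \<le> real modulus / pi"
    using K_ge_1 modulus_pos by (simp add: divide_left_mono mult_le_cancel_left1 frac_le)
  also have "\<dots> < real modulus / 2"
    by (rule divide_strict_left_mono) (use modulus_pos pi_gt3 in auto)
  finally show ?thesis using modulus_def by simp
qed

lemma v_range_lt_modulus: "2 * (X / \<sigma>) / v_step + 1 < real modulus"
proof -
  have "2 * (X / \<sigma>) / v_step = 2 * X * K"
    unfolding v_step_def using sigma_pos K_ge_1 by (simp add: field_simps)
  also have "\<dots> \<le> 2 * X * K\<^sup>2"
    using X_pos K_ge_1 by (simp add: power2_eq_square mult_le_cancel_left1)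
  also have "\<dots> \<le> 2 * pi * X * K\<^sup>2"
    using X_pos pi_gt3 by (intro mult_right_mono) auto
  finally show ?thesis using modulus_ge by simp
qed

lemma step_product: "u_step * v_step = 2 * pi / real modulus"
  using v_step_pos modulus_pos by (simp add: u_step_def)

lemma rounded_product_error:
  assumes "\<bar>u\<bar> \<le> \<sigma>" "\<bar>v\<bar> \<le> X / \<sigma>"
  shows "\<bar>u * v - 2 * pi * of_int (round (u / u_step) * round (v / v_step)) / real modulus\<bar> \<le> 5 / (4 * K)"
proof -
  define a b where "a = u_step * of_int (round (u / u_step))" and "b = v_step * of_int (round (v / v_step))"
  have "a * b = u_step * v_step * of_int (round (u / u_step) * round (v / v_step))"
    by (simp add: a_def b_def mult_ac)
  hence ab: "2 * pi * of_int (round (u / u_step) * round (v / v_step)) / real modulus = a * b"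
    by (simp add: step_product)
  have "\<bar>u * v - a * b\<bar> \<le> u_step / 2 * \<bar>v\<bar> + (\<bar>u\<bar> + u_step / 2) * (v_step / 2)"
    unfolding a_def b_def
    by (intro abs_mult_sub_mult_le abs_sub_mult_round_le u_step_pos v_step_pos)
  moreover have "u_step / 2 * \<bar>v\<bar> \<le> 1 / (2 * K)"
  proof -
    have "u_step / 2 * \<bar>v\<bar> \<le> \<sigma> / (X * K) / 2 * (X / \<sigma>)"
      using u_step_le u_step_pos assms(2) sigma_pos X_pos K_ge_1 by (intro mult_mono) auto
    also have "\<dots> = 1 / (2 * K)"
      using X_pos sigma_pos K_ge_1 by (simp add: field_simps)
    finally show ?thesis .
  qed
  moreover have "\<bar>u\<bar> * (v_step / 2) \<le> 1 / (2 * K)"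
    using assms(1) v_step_pos sigma_pos K_ge_1 by (simp add: v_step_def field_simps)
  moreover have "u_step / 2 * (v_step / 2) \<le> 1 / (4 * K)"
  proof -
    have "u_step / 2 * (v_step / 2) = pi / (2 * real modulus)"
      using step_product by (simp add: field_simps)
    also have "\<dots> \<le> pi / (2 * (2 * pi * X * K\<^sup>2))"
      using modulus_ge modulus_pos X_pos K_ge_1 by (intro divide_left_mono) auto
    also have "\<dots> = 1 / (4 * (X * K\<^sup>2))"
      by (simp add: field_simps)
    also have "\<dots> \<le> 1 / (4 * K)"
      using XK2_ge K_ge_1 by (intro divide_left_mono) auto
    finally show ?thesis .
  qed
  moreover have "(\<bar>u\<bar> + u_step / 2) * (v_step / 2) = \<bar>u\<bar> * (v_step / 2) + u_step / 2 * (v_step / 2)"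
    by (simp add: distrib_right)
  ultimately have "\<bar>u * v - a * b\<bar> \<le> 1 / (2 * K) + 1 / (2 * K) + 1 / (4 * K)"
    by linarith
  also have "\<dots> = 5 / (4 * K)"
    using K_ge_1 by (simp add: field_simps)
  finally show ?thesis unfolding ab .
qed

lemma close_if_round_u_mod_eq:
  assumes "\<bar>u\<bar> \<le> \<sigma>" "\<bar>u'\<bar> \<le> \<sigma>" "round (u / u_step) mod int modulus = round (u' / u_step) mod int modulus"
  shows "\<bar>u - u'\<bar> \<le> \<sigma> / (X * K)"
  using round_mod_eq_imp_close[OF u_step_pos assms(1,2) u_range_lt_modulus assms(3)] u_step_le by linarith

lemma close_if_round_v_mod_eq:
  assumes "\<bar>v\<bar> \<le> X / \<sigma>" "\<bar>v'\<bar> \<le> X / \<sigma>" "round (v / v_step) mod int modulus = round (v' / v_step) mod int modulus"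
  shows "\<bar>v - v'\<bar> \<le> 1 / (\<sigma> * K)"
  using round_mod_eq_imp_close[OF v_step_pos assms(1,2) v_range_lt_modulus assms(3)] by (simp add: v_step_def)

end

section \<open>Bilinear exponential sums\<close>

lemma card_pairs_mono:
  assumes "finite I" "\<And>i i'. i \<in> I \<Longrightarrow> i' \<in> I \<Longrightarrow> P i i' \<Longrightarrow> Q i i'"
  shows "card {(i, i') \<in> I \<times> I. P i i'} \<le> card {(i, i') \<in> I \<times> I. Q i i'}"
proof (rule card_mono)
  show "finite {(i, i') \<in> I \<times> I. Q i i'}"
    by (rule finite_subset[of _ "I \<times> I"]) (use assms(1) in auto)
qed (use assms(2) in auto)

lemma norm_double_sum_diff_le:
  assumes "\<And>i j. i \<in> I \<Longrightarrow> j \<in> J \<Longrightarrow> norm (f i j - g i j) \<le> c"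
  shows "norm ((\<Sum>i\<in>I. \<Sum>j\<in>J. f i j) - (\<Sum>i\<in>I. \<Sum>j\<in>J. g i j)) \<le> real (card I) * real (card J) * c"
proof -
  have "norm ((\<Sum>i\<in>I. \<Sum>j\<in>J. f i j) - (\<Sum>i\<in>I. \<Sum>j\<in>J. g i j)) \<le> (\<Sum>i\<in>I. \<Sum>j\<in>J. norm (f i j - g i j))"
    unfolding sum_subtractf[symmetric] by (rule order_trans[OF norm_sum sum_mono[OF norm_sum]])
  also have "\<dots> \<le> (\<Sum>i\<in>I. \<Sum>j\<in>J. c)"
    using assms by (intro sum_mono) auto
  finally show ?thesis
    by simp
qed

lemma norm_bilinear_cis_sum_le:
  fixes u1 u2 :: "'i \<Rightarrow> real" and v1 v2 :: "'j \<Rightarrow> real"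
  assumes "finite I" "finite J" "K \<ge> 1" "\<sigma>1 > 0" "\<sigma>2 > 0" "X1 * K \<ge> 1" "X2 * K \<ge> 1"
    and u_bounds: "\<And>i. i \<in> I \<Longrightarrow> \<bar>u1 i\<bar> \<le> \<sigma>1 \<and> \<bar>u2 i\<bar> \<le> \<sigma>2"
    and v_bounds: "\<And>j. j \<in> J \<Longrightarrow> \<bar>v1 j\<bar> \<le> X1 / \<sigma>1 \<and> \<bar>v2 j\<bar> \<le> X2 / \<sigma>2"
  shows "norm (\<Sum>i\<in>I. \<Sum>j\<in>J. cis (u1 i * v1 j + u2 i * v2 j))
    \<le> sqrt ((2 * pi * X1 * K\<^sup>2 + 3) * (2 * pi * X2 * K\<^sup>2 + 3)
        * real (card {(i, i') \<in> I \<times> I. \<bar>u1 i - u1 i'\<bar> \<le> \<sigma>1 / (X1 * K) \<and> \<bar>u2 i - u2 i'\<bar> \<le> \<sigma>2 / (X2 * K)})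
        * real (card {(j, j') \<in> J \<times> J. \<bar>v1 j - v1 j'\<bar> \<le> 1 / (\<sigma>1 * K) \<and> \<bar>v2 j - v2 j'\<bar> \<le> 1 / (\<sigma>2 * K)}))
      + real (card I) * real (card J) * (3 / K)"
    (is "_ \<le> sqrt (?B1 * ?B2 * real (card ?CI) * real (card ?CJ)) + _")
proof -
  interpret G1: rounding_grid \<sigma>1 X1 K using assms by unfold_locales
  interpret G2: rounding_grid \<sigma>2 X2 K using assms by unfold_locales
  define P1 P2 where "P1 = G1.modulus" and "P2 = G2.modulus"
  define m1 m2 where "m1 i = round (u1 i / G1.u_step)" and "m2 i = round (u2 i / G2.u_step)" for i
  define n1 n2 where "n1 j = round (v1 j / G1.v_step)" and "n2 j = round (v2 j / G2.v_step)" for j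
  define phase where "phase i j = 2 * pi * (of_int (m1 i * n1 j) / P1 + of_int (m2 i * n2 j) / P2)" for i j
  define Qh where "Qh = (\<Sum>i\<in>I. \<Sum>j\<in>J. cis (phase i j))"
  have "norm (cis (u1 i * v1 j + u2 i * v2 j) - cis (phase i j)) \<le> 3 / K" if "i \<in> I" "j \<in> J" for i j
  proof -
    have "norm (cis (u1 i * v1 j + u2 i * v2 j) - cis (phase i j)) \<le> \<bar>(u1 i * v1 j + u2 i * v2 j) - phase i j\<bar>"
      by (rule norm_cis_diff_le)
    also have "\<dots> \<le> 5 / (4 * K) + 5 / (4 * K)"
      using G1.rounded_product_error[of "u1 i" "v1 j"] G2.rounded_product_error[of "u2 i" "v2 j"]
        u_bounds[OF that(1)] v_bounds[OF that(2)]
      unfolding phase_def m1_def m2_def n1_def n2_def P1_def P2_def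
      by (simp add: abs_le_iff algebra_simps; linarith)
    also have "\<dots> \<le> 3 / K"
      using assms(3) by (simp add: field_simps)
    finally show ?thesis .
  qed
  hence "norm ((\<Sum>i\<in>I. \<Sum>j\<in>J. cis (u1 i * v1 j + u2 i * v2 j)) - Qh)
      \<le> real (card I) * real (card J) * (3 / K)"
    unfolding Qh_def by (rule norm_double_sum_diff_le)
  moreover have "norm Qh \<le> sqrt (?B1 * ?B2 * real (card ?CI) * real (card ?CJ))"
  proof -
    let ?RI = "{(i, i') \<in> I \<times> I. m1 i mod int P1 = m1 i' mod int P1 \<and> m2 i mod int P2 = m2 i' mod int P2}"
    let ?RJ = "{(j, j') \<in> J \<times> J. n1 j mod int P1 = n1 j' mod int P1 \<and> n2 j mod int P2 = n2 j' mod int P2}"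
    have "card ?RI \<le> card ?CI"
      using G1.close_if_round_u_mod_eq G2.close_if_round_u_mod_eq u_bounds
      by (intro card_pairs_mono[OF assms(1)]) (auto simp: m1_def m2_def P1_def P2_def)
    moreover have "card ?RJ \<le> card ?CJ"
      using G1.close_if_round_v_mod_eq G2.close_if_round_v_mod_eq v_bounds
      by (intro card_pairs_mono[OF assms(2)]) (auto simp: n1_def n2_def P1_def P2_def)
    moreover have "real P1 * real P2 \<le> ?B1 * ?B2"
      using G1.modulus_le G2.modulus_le by (intro mult_mono) (auto simp: P1_def P2_def)
    moreover have "(norm Qh)\<^sup>2 \<le> real (card ?RI) * (real P1 * real P2) * real (card ?RJ)"
      unfolding Qh_def phase_def
      using norm_lattice_cis_sum_squared_le[OF assms(1,2) G1.modulus_pos G2.modulus_pos, of m1 n1 m2 n2]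
      by (simp add: P1_def P2_def)
    ultimately have "(norm Qh)\<^sup>2 \<le> real (card ?CI) * (?B1 * ?B2) * real (card ?CJ)"
      using G1.X_pos G2.X_pos by (elim order_trans) (intro mult_mono[OF mult_mono]; simp)
    thus ?thesis
      by (simp add: real_le_rsqrt mult_ac)
  qed
  moreover have "norm (\<Sum>i\<in>I. \<Sum>j\<in>J. cis (u1 i * v1 j + u2 i * v2 j))
      \<le> norm Qh + norm ((\<Sum>i\<in>I. \<Sum>j\<in>J. cis (u1 i * v1 j + u2 i * v2 j)) - Qh)"
    by (rule norm_triangle_sub)
  ultimately show ?thesis
    by linarith
qed

section \<open>Approximate energy of separated sets\<close>

lemma separated_subset: "separated d A \<Longrightarrow> B \<subseteq> A \<Longrightarrow> separated d B"
  by (auto simp: separated_def)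

lemma card_separated_le:
  assumes "\<delta> > 0" "separated \<delta> A" "A \<subseteq> {a..b}" "a \<le> b"
  shows "real (card A) \<le> (b - a) / \<delta> + 1"
proof (cases "finite A")
  case False
  thus ?thesis using assms by simp
next
  case True
  thus ?thesis using assms(2-4)
  proof (induction A arbitrary: b rule: finite_remove_induct)
    case empty
    thus ?case using assms(1) by simp
  next
    case (remove A)
    define m where "m = Max A"
    have "m \<in> A" and le_m: "\<And>x. x \<in> A \<Longrightarrow> x \<le> m"
      using remove.hyps by (simp_all add: m_def)
    have card_A: "card A = card (A - {m}) + 1"
      using \<open>m \<in> A\<close> remove.hyps(1) by (simp add: card_gt_0_iff) (metis card_gt_0_iff empty_iff Suc_pred)
    show ?case
    proof (cases "A - {m} = {}")
      case True
      hence "card A = 1" using card_A by (metis card.empty add_0)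
      thus ?thesis using remove.prems assms(1) by simp
    next
      case False
      have below: "A - {m} \<subseteq> {a..m - \<delta>}"
        using remove.prems \<open>m \<in> A\<close> le_m by (force simp: separated_def)
      with False have "a \<le> m - \<delta>" by auto
      hence "real (card (A - {m})) \<le> (m - \<delta> - a) / \<delta> + 1"
        using remove.IH[OF \<open>m \<in> A\<close> separated_subset[OF remove.prems(1)] below] by blast
      moreover have "m \<le> b" using \<open>m \<in> A\<close> remove.prems(2) by auto
      ultimately show ?thesis
        using card_A assms(1) by (simp add: field_simps)
    qed
  qed
qed

lemma card_separated_Int_le:
  assumes "\<delta> > 0" "separated \<delta> A" "a \<le> b"
  shows "real (card (A \<inter> {a..b})) \<le> (b - a) / \<delta> + 1"
  using assms by (intro card_separated_le) (auto elim: separated_subset)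

lemma card_sum_diff_near_le:
  assumes "\<delta> > 0" "separated \<delta> A" "0 \<le> \<epsilon>" "0 \<le> \<eta>" "\<bar>D\<bar> \<le> \<theta>" "finite A"
  shows "real (card {x \<in> A. \<exists>y. \<bar>(x - y)\<^sup>2 - D\<^sup>2\<bar> \<le> \<eta> \<and> \<bar>x + y - c\<bar> \<le> \<epsilon>})
    \<le> (\<epsilon> + \<theta> + sqrt \<eta>) / \<delta> + 1"
proof -
  define r where "r = \<epsilon> + \<theta> + sqrt \<eta>"
  have sub: "{x \<in> A. \<exists>y. \<bar>(x - y)\<^sup>2 - D\<^sup>2\<bar> \<le> \<eta> \<and> \<bar>x + y - c\<bar> \<le> \<epsilon>} \<subseteq> A \<inter> {(c - r) / 2 .. (c + r) / 2}"
  proof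
    fix x assume "x \<in> {x \<in> A. \<exists>y. \<bar>(x - y)\<^sup>2 - D\<^sup>2\<bar> \<le> \<eta> \<and> \<bar>x + y - c\<bar> \<le> \<epsilon>}"
    then obtain y where "x \<in> A" and close: "\<bar>(x - y)\<^sup>2 - D\<^sup>2\<bar> \<le> \<eta>" "\<bar>x + y - c\<bar> \<le> \<epsilon>"
      by blast
    have "0 \<le> \<theta>" using assms(5) by linarith
    have "(x - y)\<^sup>2 \<le> D\<^sup>2 + \<eta>" using close(1) by (simp add: abs_le_iff)
    also have "\<dots> \<le> \<theta>\<^sup>2 + \<eta>" using power_mono[OF assms(5) abs_ge_zero, of 2] by simp
    also have "\<dots> \<le> (\<theta> + sqrt \<eta>)\<^sup>2" using \<open>0 \<le> \<theta>\<close> assms(4) by (simp add: power2_sum)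
    finally have "\<bar>x - y\<bar>\<^sup>2 \<le> (\<theta> + sqrt \<eta>)\<^sup>2" by simp
    hence "\<bar>x - y\<bar> \<le> \<theta> + sqrt \<eta>"
      by (rule power2_le_imp_le) (use \<open>0 \<le> \<theta>\<close> assms(4) in simp)
    hence "c - r \<le> 2 * x" "2 * x \<le> c + r"
      using close(2) unfolding r_def abs_le_iff by linarith+
    thus "x \<in> A \<inter> {(c - r) / 2 .. (c + r) / 2}"
      using \<open>x \<in> A\<close> by simp
  qed
  have "real (card {x \<in> A. \<exists>y. \<bar>(x - y)\<^sup>2 - D\<^sup>2\<bar> \<le> \<eta> \<and> \<bar>x + y - c\<bar> \<le> \<epsilon>})
      \<le> real (card (A \<inter> {(c - r) / 2 .. (c + r) / 2}))"
    using assms(6) by (intro of_nat_mono card_mono[OF _ sub]) simp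
  also have "\<dots> \<le> r / \<delta> + 1"
    using card_separated_Int_le[OF assms(1,2), of "(c - r) / 2" "(c + r) / 2"] assms(3-5)
    by (simp add: r_def diff_divide_distrib add_divide_distrib)
  finally show ?thesis unfolding r_def .
qed

lemma abs_abs_diff_mult_abs_add: "\<bar>\<bar>a\<bar> - \<bar>b\<bar>\<bar> * (\<bar>a\<bar> + \<bar>b\<bar>) = \<bar>a\<^sup>2 - b\<^sup>2\<bar>" for a b :: real
proof -
  have "(\<bar>a\<bar> - \<bar>b\<bar>) * (\<bar>a\<bar> + \<bar>b\<bar>) = a\<^sup>2 - b\<^sup>2"
    by (simp add: algebra_simps power2_eq_square flip: abs_mult)
  thus ?thesis by (metis abs_mult abs_of_nonneg abs_ge_zero add_nonneg_nonneg)
qed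

lemma card_sum_diff_far_le:
  assumes "\<delta> > 0" "separated \<delta> A" "0 \<le> \<epsilon>" "0 \<le> \<eta>" "\<theta> \<le> \<bar>D\<bar>" "\<theta> > 0" "finite A"
  shows "real (card {x \<in> A. \<exists>y. \<bar>(x - y)\<^sup>2 - D\<^sup>2\<bar> \<le> \<eta> \<and> \<bar>x + y - c\<bar> \<le> \<epsilon>})
    \<le> 2 * ((\<epsilon> + \<eta> / \<theta>) / \<delta> + 1)"
proof -
  define w where "w = \<epsilon> + \<eta> / \<theta>"
  define I where "I s = {(c + s * \<bar>D\<bar> - w) / 2 .. (c + s * \<bar>D\<bar> + w) / 2}" for s :: real
  have sub: "{x \<in> A. \<exists>y. \<bar>(x - y)\<^sup>2 - D\<^sup>2\<bar> \<le> \<eta> \<and> \<bar>x + y - c\<bar> \<le> \<epsilon>} \<subseteq> (A \<inter> I 1) \<union> (A \<inter> I (-1))"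
  proof
    fix x assume "x \<in> {x \<in> A. \<exists>y. \<bar>(x - y)\<^sup>2 - D\<^sup>2\<bar> \<le> \<eta> \<and> \<bar>x + y - c\<bar> \<le> \<epsilon>}"
    then obtain y where "x \<in> A" and close: "\<bar>(x - y)\<^sup>2 - D\<^sup>2\<bar> \<le> \<eta>" "\<bar>x + y - c\<bar> \<le> \<epsilon>"
      by blast
    have "\<bar>\<bar>x - y\<bar> - \<bar>D\<bar>\<bar> * \<theta> \<le> \<bar>\<bar>x - y\<bar> - \<bar>D\<bar>\<bar> * (\<bar>x - y\<bar> + \<bar>D\<bar>)"
      using assms(5) by (intro mult_left_mono) auto
    also have "\<dots> \<le> \<eta>"
      using close(1) by (simp only: abs_abs_diff_mult_abs_add)
    finally have "\<bar>\<bar>x - y\<bar> - \<bar>D\<bar>\<bar> \<le> \<eta> / \<theta>"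
      using assms(6) by (simp add: field_simps)
    hence "x \<in> I 1 \<or> x \<in> I (-1)"
      using close(2) unfolding I_def w_def abs_le_iff by (cases "x \<ge> y") auto
    thus "x \<in> (A \<inter> I 1) \<union> (A \<inter> I (-1))"
      using \<open>x \<in> A\<close> by blast
  qed
  have bound: "real (card (A \<inter> I s)) \<le> w / \<delta> + 1" for s
    using card_separated_Int_le[OF assms(1,2), of "(c + s * \<bar>D\<bar> - w) / 2" "(c + s * \<bar>D\<bar> + w) / 2"]
      assms(3,4,6)
    by (simp add: I_def w_def diff_divide_distrib add_divide_distrib)
  have "real (card {x \<in> A. \<exists>y. \<bar>(x - y)\<^sup>2 - D\<^sup>2\<bar> \<le> \<eta> \<and> \<bar>x + y - c\<bar> \<le> \<epsilon>})
      \<le> real (card (A \<inter> I 1 \<union> A \<inter> I (-1)))"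
    using assms(7) by (intro of_nat_mono card_mono[OF _ sub]) simp
  also have "\<dots> \<le> real (card (A \<inter> I 1)) + real (card (A \<inter> I (-1)))"
    using card_Un_le of_nat_mono by fastforce
  also have "\<dots> \<le> 2 * (w / \<delta> + 1)"
    using bound[of 1] bound[of "-1"] by simp
  finally show ?thesis unfolding w_def .
qed

lemma square_diff_close:
  fixes x1 x2 x3 x4 :: real
  assumes "x1 \<in> {0..\<rho>}" "x2 \<in> {0..\<rho>}" "x3 \<in> {0..\<rho>}" "x4 \<in> {0..\<rho>}"
    and "\<bar>(x1 - x2) - (x3 - x4)\<bar> \<le> \<epsilon>1" and "\<bar>(x1\<^sup>2 - x2\<^sup>2) - (x3\<^sup>2 - x4\<^sup>2)\<bar> \<le> \<epsilon>2"
  shows "\<bar>(x2 - x3)\<^sup>2 - (x1 - x4)\<^sup>2\<bar> \<le> 2 * \<epsilon>2 + 4 * \<rho> * \<epsilon>1"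
proof -
  have "(x1 - x4)\<^sup>2 - (x2 - x3)\<^sup>2 =
      2 * ((x1\<^sup>2 - x2\<^sup>2) - (x3\<^sup>2 - x4\<^sup>2)) - ((x1 + x4) - (x2 + x3)) * ((x1 + x4) + (x2 + x3))"
    by (simp add: power2_eq_square algebra_simps)
  moreover have "\<bar>((x1 + x4) - (x2 + x3)) * ((x1 + x4) + (x2 + x3))\<bar> \<le> \<epsilon>1 * (4 * \<rho>)"
    unfolding abs_mult using assms by (intro mult_mono) (auto simp: algebra_simps)
  ultimately show ?thesis
    using assms(6) unfolding abs_le_iff by (simp add: mult_ac; linarith)
qed

text \<open>An approximate additive energy of the parabola {(x, x^2) | x \<in> A}.\<close>
definition energy_quadruples :: "real set \<Rightarrow> real \<Rightarrow> real \<Rightarrow> ((real \<times> real) \<times> (real \<times> real)) set" where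
  "energy_quadruples A \<epsilon>1 \<epsilon>2 = {((x1, x2), (x3, x4)) \<in> (A \<times> A) \<times> (A \<times> A).
     \<bar>(x1 - x2) - (x3 - x4)\<bar> \<le> \<epsilon>1 \<and> \<bar>(x1\<^sup>2 - x2\<^sup>2) - (x3\<^sup>2 - x4\<^sup>2)\<bar> \<le> \<epsilon>2}"

definition energy_bound :: "real \<Rightarrow> real \<Rightarrow> real \<Rightarrow> real \<Rightarrow> real \<Rightarrow> real" where
  "energy_bound N \<delta> \<theta> \<epsilon> \<eta> =
     N\<^sup>2 * (2 * ((\<epsilon> + \<eta> / \<theta>) / \<delta> + 1)) + N * (2 * \<theta> / \<delta> + 1) * ((\<epsilon> + \<theta> + sqrt \<eta>) / \<delta> + 1)"

lemma card_energy_quadruples_le_sum: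
  assumes "finite A" "A \<subseteq> {0..\<rho>}" "separated \<delta> A" "2 * \<epsilon>1 < \<delta>" "2 * \<epsilon>2 + 4 * \<rho> * \<epsilon>1 \<le> \<eta>"
  shows "real (card (energy_quadruples A \<epsilon>1 \<epsilon>2)) \<le> (\<Sum>(x1, x4)\<in>A \<times> A.
     real (card {x \<in> A. \<exists>y. \<bar>(x - y)\<^sup>2 - (x1 - x4)\<^sup>2\<bar> \<le> \<eta> \<and> \<bar>x + y - (x1 + x4)\<bar> \<le> \<epsilon>1}))"
proof -
  define E where "E = energy_quadruples A \<epsilon>1 \<epsilon>2"
  define X where "X = (\<lambda>(x1, x4). {x \<in> A. \<exists>y. \<bar>(x - y)\<^sup>2 - (x1 - x4)\<^sup>2\<bar> \<le> \<eta> \<and> \<bar>x + y - (x1 + x4)\<bar> \<le> \<epsilon>1})"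
  define f :: "(real \<times> real) \<times> (real \<times> real) \<Rightarrow> (real \<times> real) \<times> real"
    where "f = (\<lambda>((x1, x2), (x3, x4)). ((x1, x4), x2))"
  \<comment> \<open>Given x1, x2 and x4, the point x3 is known up to 2 \<epsilon>1 < \<delta>, hence unique.\<close>
  have "inj_on f E"
  proof (rule inj_onI, clarsimp simp: f_def)
    fix x1 x2 x3 x4 y3
    assume "((x1, x2), x3, x4) \<in> E" "((x1, x2), y3, x4) \<in> E"
    hence "x3 \<in> A" "y3 \<in> A" "\<bar>x3 - y3\<bar> < \<delta>"
      using assms(4) by (auto simp: E_def energy_quadruples_def abs_le_iff)
    thus "x3 = y3"
      using assms(3) by (force simp: separated_def)
  qed
  moreover have "f ` E \<subseteq> Sigma (A \<times> A) X"
  proof (rule image_subsetI)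
    fix q assume "q \<in> E"
    then obtain x1 x2 x3 x4 where q: "q = ((x1, x2), (x3, x4))"
      by (metis prod.collapse)
    from \<open>q \<in> E\<close> have "x1 \<in> A" "x2 \<in> A" "x3 \<in> A" "x4 \<in> A"
      and close: "\<bar>(x1 - x2) - (x3 - x4)\<bar> \<le> \<epsilon>1" "\<bar>(x1\<^sup>2 - x2\<^sup>2) - (x3\<^sup>2 - x4\<^sup>2)\<bar> \<le> \<epsilon>2"
      by (auto simp: E_def energy_quadruples_def q)
    moreover have "\<bar>(x2 - x3)\<^sup>2 - (x1 - x4)\<^sup>2\<bar> \<le> \<eta>"
      using square_diff_close[OF _ _ _ _ close] assms(2,5) \<open>x1 \<in> A\<close> \<open>x2 \<in> A\<close> \<open>x3 \<in> A\<close> \<open>x4 \<in> A\<close>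
      by fastforce
    moreover have "\<bar>x2 + x3 - (x1 + x4)\<bar> \<le> \<epsilon>1"
      using close(1) by (simp add: abs_le_iff; linarith)
    ultimately show "f q \<in> Sigma (A \<times> A) X"
      by (auto simp: f_def X_def q)
  qed
  ultimately have "card E \<le> card (Sigma (A \<times> A) X)"
    using assms(1) by (intro card_inj_on_le) (auto simp: X_def)
  also have "\<dots> = (\<Sum>p\<in>A \<times> A. card (X p))"
    using assms(1) by (intro card_SigmaI) (auto simp: X_def)
  finally show ?thesis
    unfolding E_def X_def by (simp add: case_prod_unfold flip: of_nat_sum)
qed

lemma card_near_diagonal_le:
  assumes "finite A" "\<delta> > 0" "separated \<delta> A" "\<theta> \<ge> 0"
  shows "real (card {(x, y) \<in> A \<times> A. \<bar>x - y\<bar> < \<theta>}) \<le> real (card A) * (2 * \<theta> / \<delta> + 1)"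
proof -
  have "{(x, y) \<in> A \<times> A. \<bar>x - y\<bar> < \<theta>} \<subseteq> Sigma A (\<lambda>x. A \<inter> {x - \<theta> .. x + \<theta>})"
    by (auto simp: abs_less_iff)
  hence "card {(x, y) \<in> A \<times> A. \<bar>x - y\<bar> < \<theta>} \<le> card (Sigma A (\<lambda>x. A \<inter> {x - \<theta> .. x + \<theta>}))"
    using assms(1) by (intro card_mono) auto
  also have "\<dots> = (\<Sum>x\<in>A. card (A \<inter> {x - \<theta> .. x + \<theta>}))"
    using assms(1) by (intro card_SigmaI) auto
  finally have "real (card {(x, y) \<in> A \<times> A. \<bar>x - y\<bar> < \<theta>}) \<le> real (\<Sum>x\<in>A. card (A \<inter> {x - \<theta> .. x + \<theta>}))"
    by (rule of_nat_mono)
  also have "\<dots> = (\<Sum>x\<in>A. real (card (A \<inter> {x - \<theta> .. x + \<theta>})))"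
    by (rule of_nat_sum)
  also have "\<dots> \<le> (\<Sum>x\<in>A. 2 * \<theta> / \<delta> + 1)"
  proof (rule sum_mono)
    fix x
    show "real (card (A \<inter> {x - \<theta> .. x + \<theta>})) \<le> 2 * \<theta> / \<delta> + 1"
      using card_separated_Int_le[OF assms(2,3), of "x - \<theta>" "x + \<theta>"] assms(4) by simp
  qed
  finally show ?thesis
    by (simp add: mult.commute)
qed

lemma card_energy_quadruples_le:
  assumes "finite A" "A \<subseteq> {0..\<rho>}" "separated \<delta> A" "real (card A) \<le> N"
    and "\<delta> > 0" "\<theta> > 0" "0 \<le> \<epsilon>1" "2 * \<epsilon>1 < \<delta>" "0 \<le> \<eta>" "2 * \<epsilon>2 + 4 * \<rho> * \<epsilon>1 \<le> \<eta>"
  shows "real (card (energy_quadruples A \<epsilon>1 \<epsilon>2)) \<le> energy_bound N \<delta> \<theta> \<epsilon>1 \<eta>"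
proof -
  define far near where "far = 2 * ((\<epsilon>1 + \<eta> / \<theta>) / \<delta> + 1)" and "near = (\<epsilon>1 + \<theta> + sqrt \<eta>) / \<delta> + 1"
  define Near where "Near = {(x, y) \<in> A \<times> A. \<bar>x - y\<bar> < \<theta>}"
  have "0 \<le> far" "0 \<le> near"
    using assms(5-7,9) by (auto simp: far_def near_def)
  have "real (card (energy_quadruples A \<epsilon>1 \<epsilon>2)) \<le> (\<Sum>(x1, x4)\<in>A \<times> A.
      real (card {x \<in> A. \<exists>y. \<bar>(x - y)\<^sup>2 - (x1 - x4)\<^sup>2\<bar> \<le> \<eta> \<and> \<bar>x + y - (x1 + x4)\<bar> \<le> \<epsilon>1}))"
    by (rule card_energy_quadruples_le_sum[OF assms(1-3,8,10)])
  also have "\<dots> \<le> (\<Sum>p\<in>A \<times> A. far + (if p \<in> Near then near else 0))"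
    unfolding case_prod_unfold
  proof (rule sum_mono)
    fix p assume "p \<in> A \<times> A"
    thus "real (card {x \<in> A. \<exists>y. \<bar>(x - y)\<^sup>2 - (fst p - snd p)\<^sup>2\<bar> \<le> \<eta> \<and> \<bar>x + y - (fst p + snd p)\<bar> \<le> \<epsilon>1})
        \<le> far + (if p \<in> Near then near else 0)"
      using card_sum_diff_near_le[OF assms(5,3,7,9) _ assms(1), of "fst p - snd p" \<theta> "fst p + snd p"]
        card_sum_diff_far_le[OF assms(5,3,7,9) _ assms(6,1), of "fst p - snd p" "fst p + snd p"]
        \<open>0 \<le> far\<close> \<open>0 \<le> near\<close>
      by (fastforce simp: far_def near_def Near_def)
  qed
  also have "\<dots> = (real (card A))\<^sup>2 * far + real (card Near) * near"
  proof -
    have "A \<times> A \<inter> Near = Near" by (auto simp: Near_def)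
    thus ?thesis using assms(1) by (simp add: sum.distrib sum.If_cases card_cartesian_product power2_eq_square)
  qed
  also have "\<dots> \<le> N\<^sup>2 * far + N * (2 * \<theta> / \<delta> + 1) * near"
  proof (rule add_mono)
    show "(real (card A))\<^sup>2 * far \<le> N\<^sup>2 * far"
      by (rule mult_right_mono[OF power_mono]) (use assms(4) \<open>0 \<le> far\<close> in auto)
    have "real (card A) * (2 * \<theta> / \<delta> + 1) \<le> N * (2 * \<theta> / \<delta> + 1)"
      using assms(4-6) by (intro mult_right_mono) auto
    hence "real (card Near) \<le> N * (2 * \<theta> / \<delta> + 1)"
      using card_near_diagonal_le[OF assms(1,5,3), of \<theta>] assms(6) unfolding Near_def by linarith
    thus "real (card Near) * near \<le> N * (2 * \<theta> / \<delta> + 1) * near"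
      using \<open>0 \<le> near\<close> by (rule mult_right_mono)
  qed
  also have "\<dots> = energy_bound N \<delta> \<theta> \<epsilon>1 \<eta>"
    by (simp add: energy_bound_def far_def near_def)
  finally show ?thesis .
qed

lemma finite_energy_quadruples: "finite A \<Longrightarrow> finite (energy_quadruples A \<epsilon>1 \<epsilon>2)"
  by (rule finite_subset[of _ "(A \<times> A) \<times> (A \<times> A)"]) (auto simp: energy_quadruples_def)

section \<open>The quadratic exponential sum\<close>

lemma cis_quadratic_fourfold_product:
  "cis (R * (s * t + q * s\<^sup>2 * t\<^sup>2)) * cnj (cis (R * (s * t' + q * s\<^sup>2 * t'\<^sup>2))) *
   cnj (cis (R * (s' * t + q * s'\<^sup>2 * t\<^sup>2))) * cis (R * (s' * t' + q * s'\<^sup>2 * t'\<^sup>2))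
   = cis ((s - s') * (R * (t - t')) + (s\<^sup>2 - s'\<^sup>2) * (R * q * (t\<^sup>2 - t'\<^sup>2)))"
  unfolding cis_cnj cis_mult by (rule arg_cong[where f = cis]) (simp add: algebra_simps)

lemma norm_quadratic_cis_sum_pow4_le_pair_sum:
  assumes "finite T"
  shows "(norm (\<Sum>s\<in>S. \<Sum>t\<in>T. cis (R * (s * t + q * s\<^sup>2 * t\<^sup>2))))^4
    \<le> (real (card S))\<^sup>2 * (real (card T))\<^sup>2 * norm (\<Sum>(s, s')\<in>S \<times> S. \<Sum>(t, t')\<in>T \<times> T.
          cis ((s - s') * (R * (t - t')) + (s\<^sup>2 - s'\<^sup>2) * (R * q * (t\<^sup>2 - t'\<^sup>2))))"
  using norm_double_sum_pow4_le[OF assms, where S = S and c = "\<lambda>s t. cis (R * (s * t + q * s\<^sup>2 * t\<^sup>2))"]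
  unfolding cis_quadratic_fourfold_product by (simp add: sum.cartesian_product')

lemma abs_le_div_of_abs_mult_diff_le:
  fixes a x y c :: real
  assumes "\<bar>a * x - a * y\<bar> \<le> c" "a \<noteq> 0"
  shows "\<bar>x - y\<bar> \<le> c / \<bar>a\<bar>"
proof -
  have "\<bar>a\<bar> * \<bar>x - y\<bar> \<le> c"
    using assms(1) by (simp add: right_diff_distrib flip: abs_mult)
  thus ?thesis
    using assms(2) by (simp add: pos_le_divide_eq mult.commute)
qed

lemma abs_diff_squares_le:
  fixes x y \<rho> :: real
  assumes "x \<in> {0..\<rho>}" "y \<in> {0..\<rho>}"
  shows "\<bar>x\<^sup>2 - y\<^sup>2\<bar> \<le> \<rho>\<^sup>2"
proof -
  have "x\<^sup>2 \<le> \<rho>\<^sup>2" "y\<^sup>2 \<le> \<rho>\<^sup>2"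
    using assms by (auto intro!: power_mono)
  thus ?thesis
    unfolding abs_le_iff using zero_le_power2[of x] zero_le_power2[of y] by linarith
qed

lemma norm_quadratic_cis_sum_pow4_le:
  fixes S T :: "real set" and R \<rho> q K :: real
  assumes "finite S" "finite T" "S \<subseteq> {0..\<rho>}" "T \<subseteq> {0..\<rho>}"
    and "R > 0" "\<rho> > 0" "q \<noteq> 0" "K \<ge> 1" "R * \<rho>\<^sup>2 * K \<ge> 1" "R * \<bar>q\<bar> * \<rho>^4 * K \<ge> 1"
  defines "\<epsilon>1 \<equiv> 1 / (R * \<rho> * K)" and "\<epsilon>2 \<equiv> 1 / (R * \<bar>q\<bar> * \<rho>\<^sup>2 * K)"
  shows "(norm (\<Sum>s\<in>S. \<Sum>t\<in>T. cis (R * (s * t + q * s\<^sup>2 * t\<^sup>2))))^4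
    \<le> (real (card S))\<^sup>2 * (real (card T))\<^sup>2 *
       (sqrt ((2 * pi * (R * \<rho>\<^sup>2) * K\<^sup>2 + 3) * (2 * pi * (R * \<bar>q\<bar> * \<rho>^4) * K\<^sup>2 + 3)
          * real (card (energy_quadruples S \<epsilon>1 \<epsilon>2)) * real (card (energy_quadruples T \<epsilon>1 \<epsilon>2)))
        + (real (card S))\<^sup>2 * (real (card T))\<^sup>2 * (3 / K))"
    (is "_ \<le> ?N * (sqrt (?B * _ * _) + _)")
proof -
  define u1 u2 :: "real \<times> real \<Rightarrow> real"
    where "u1 = (\<lambda>(s, s'). s - s')" and "u2 = (\<lambda>(s, s'). s\<^sup>2 - s'\<^sup>2)"
  define v1 v2 :: "real \<times> real \<Rightarrow> real"
    where "v1 = (\<lambda>(t, t'). R * (t - t'))" and "v2 = (\<lambda>(t, t'). R * q * (t\<^sup>2 - t'\<^sup>2))"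
  let ?CS = "{(i, i') \<in> (S \<times> S) \<times> (S \<times> S). \<bar>u1 i - u1 i'\<bar> \<le> \<rho> / (R * \<rho>\<^sup>2 * K)
      \<and> \<bar>u2 i - u2 i'\<bar> \<le> \<rho>\<^sup>2 / (R * \<bar>q\<bar> * \<rho>^4 * K)}"
  let ?CT = "{(j, j') \<in> (T \<times> T) \<times> (T \<times> T). \<bar>v1 j - v1 j'\<bar> \<le> 1 / (\<rho> * K)
      \<and> \<bar>v2 j - v2 j'\<bar> \<le> 1 / (\<rho>\<^sup>2 * K)}"
  have weyl: "(norm (\<Sum>s\<in>S. \<Sum>t\<in>T. cis (R * (s * t + q * s\<^sup>2 * t\<^sup>2))))^4
      \<le> ?N * norm (\<Sum>i\<in>S \<times> S. \<Sum>j\<in>T \<times> T. cis (u1 i * v1 j + u2 i * v2 j))"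
    using norm_quadratic_cis_sum_pow4_le_pair_sum[OF assms(2), where S = S and R = R and q = q]
    by (simp add: u1_def u2_def v1_def v2_def case_prod_unfold)
  have u_bounds: "\<bar>u1 i\<bar> \<le> \<rho> \<and> \<bar>u2 i\<bar> \<le> \<rho>\<^sup>2" if "i \<in> S \<times> S" for i
  proof -
    have "fst i \<in> {0..\<rho>}" "snd i \<in> {0..\<rho>}"
      using that assms(3) by auto
    thus ?thesis
      using abs_diff_squares_le[of "fst i" \<rho> "snd i"] by (auto simp: u1_def u2_def case_prod_unfold abs_le_iff)
  qed
  have v_bounds: "\<bar>v1 j\<bar> \<le> R * \<rho>\<^sup>2 / \<rho> \<and> \<bar>v2 j\<bar> \<le> R * \<bar>q\<bar> * \<rho>^4 / \<rho>\<^sup>2" if "j \<in> T \<times> T" for j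
  proof -
    have j: "fst j \<in> {0..\<rho>}" "snd j \<in> {0..\<rho>}"
      using that assms(4) by auto
    have "R * \<bar>fst j - snd j\<bar> \<le> R * \<rho>" "R * \<bar>q\<bar> * \<bar>(fst j)\<^sup>2 - (snd j)\<^sup>2\<bar> \<le> R * \<bar>q\<bar> * \<rho>\<^sup>2"
      using j abs_diff_squares_le[OF j] assms(5) by (auto simp: abs_le_iff intro!: mult_left_mono)
    thus ?thesis
      using assms(5,6) by (simp add: v1_def v2_def case_prod_unfold abs_mult power2_eq_square power4_eq_xxxx)
  qed
  have "norm (\<Sum>i\<in>S \<times> S. \<Sum>j\<in>T \<times> T. cis (u1 i * v1 j + u2 i * v2 j))
      \<le> sqrt (?B * real (card ?CS) * real (card ?CT)) + real (card (S \<times> S)) * real (card (T \<times> T)) * (3 / K)"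
    by (rule norm_bilinear_cis_sum_le) (use assms(1,2,6,8-10) u_bounds v_bounds in \<open>auto simp: mult_ac\<close>)
  also have "\<dots> \<le> sqrt (?B * real (card (energy_quadruples S \<epsilon>1 \<epsilon>2)) * real (card (energy_quadruples T \<epsilon>1 \<epsilon>2)))
      + (real (card S))\<^sup>2 * (real (card T))\<^sup>2 * (3 / K)"
  proof -
    have "?CS \<subseteq> energy_quadruples S \<epsilon>1 \<epsilon>2"
    proof -
      have "\<rho> / (R * \<rho>\<^sup>2 * K) = \<epsilon>1" "\<rho>\<^sup>2 / (R * \<bar>q\<bar> * \<rho>^4 * K) = \<epsilon>2"
        using assms(6) by (simp_all add: \<epsilon>1_def \<epsilon>2_def power2_eq_square power4_eq_xxxx)
      thus ?thesis
        by (auto simp: energy_quadruples_def u1_def u2_def)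
    qed
    moreover have "?CT \<subseteq> energy_quadruples T \<epsilon>1 \<epsilon>2"
    proof -
      have "\<bar>(a - b) - (c - d)\<bar> \<le> \<epsilon>1" if "\<bar>R * (a - b) - R * (c - d)\<bar> \<le> 1 / (\<rho> * K)" for a b c d
        using abs_le_div_of_abs_mult_diff_le[OF that] assms(5) by (simp add: \<epsilon>1_def mult_ac)
      moreover have "\<bar>(a - b) - (c - d)\<bar> \<le> \<epsilon>2"
        if "\<bar>R * q * (a - b) - R * q * (c - d)\<bar> \<le> 1 / (\<rho>\<^sup>2 * K)" for a b c d
        using abs_le_div_of_abs_mult_diff_le[OF that] assms(5,7) by (simp add: \<epsilon>2_def abs_mult mult_ac)
      ultimately show ?thesis
        by (auto simp: energy_quadruples_def v1_def v2_def)
    qed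
    ultimately have "card ?CS \<le> card (energy_quadruples S \<epsilon>1 \<epsilon>2)" "card ?CT \<le> card (energy_quadruples T \<epsilon>1 \<epsilon>2)"
      using card_mono[OF finite_energy_quadruples[OF assms(1)]] card_mono[OF finite_energy_quadruples[OF assms(2)]]
      by blast+
    moreover have "0 \<le> ?B"
      using assms(5) by simp
    ultimately show ?thesis
      using assms(1,2) by (auto intro!: real_sqrt_le_mono mult_mono simp: card_cartesian_product power2_eq_square)
  qed
  finally have bilinear: "norm (\<Sum>i\<in>S \<times> S. \<Sum>j\<in>T \<times> T. cis (u1 i * v1 j + u2 i * v2 j))
      \<le> sqrt (?B * real (card (energy_quadruples S \<epsilon>1 \<epsilon>2)) * real (card (energy_quadruples T \<epsilon>1 \<epsilon>2)))
        + (real (card S))\<^sup>2 * (real (card T))\<^sup>2 * (3 / K)" .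
  have "0 \<le> ?N"
    by simp
  from weyl mult_left_mono[OF bilinear this] show ?thesis
    by (rule order_trans)
qed

text \<open>
  The scales: points lie in [0, \<rho>] with \<rho> = R^(-1/5) and spacing R^(-1/2), the grid refinement
  is K = R^(1/100), the near-diagonal width is R^(-4/15), and \<eta> bounds 2 \<epsilon>2 + 4 \<rho> \<epsilon>1 once
  |q| >= R^(-1/1000) / 5.
\<close>
definition fourth_moment_bound :: "real \<Rightarrow> real \<Rightarrow> real" where
  "fourth_moment_bound C R =
    (let \<rho> = R powr (-1/5); K = R powr (1/100); N = \<rho> * sqrt R + 1; \<epsilon> = 1 / (R * \<rho> * K);
         \<eta> = 10 * R powr (1/1000) / (R * \<rho>\<^sup>2 * K) + 4 * \<rho> * \<epsilon>
     in N^4 * (sqrt ((2 * pi * (R * \<rho>\<^sup>2) * K\<^sup>2 + 3) * (2 * pi * (R * C * \<rho>^4) * K\<^sup>2 + 3)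
                 * (energy_bound N (1 / sqrt R) (R powr (-4/15)) \<epsilon> \<eta>)\<^sup>2) + N^4 * (3 / K)))"

definition sufficiently_large :: "real \<Rightarrow> real \<Rightarrow> bool" where
  "sufficiently_large C R \<longleftrightarrow>
     R \<ge> 1 \<and> R * (R powr (-1/5))\<^sup>2 * R powr (1/100) \<ge> 1 \<and>
     R * (R powr (-1/1000) / 5) * (R powr (-1/5))^4 * R powr (1/100) \<ge> 1 \<and>
     2 / (R * R powr (-1/5) * R powr (1/100)) < 1 / sqrt R \<and>
     (R powr (-1/5) * sqrt R + 1)\<^sup>2 \<le> 5 * R powr (3/5) \<and>
     fourth_moment_bound C R < (R powr (3/5 - 1/1000) / C) ^ 4"

lemma eventually_sufficiently_large:
  assumes "C > 0"
  shows "eventually (sufficiently_large C) at_top"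
  unfolding sufficiently_large_def fourth_moment_bound_def energy_bound_def Let_def
  using assms by (intro eventually_conj; real_asymp)

lemma card_separated_window_le:
  assumes "R > 0" "A \<subseteq> {0 .. R powr (-1/5)}" "separated (1 / sqrt R) A"
  shows "real (card A) \<le> R powr (-1/5) * sqrt R + 1"
  using card_separated_le[OF _ assms(3,2)] assms(1) by simp

lemma norm_quadratic_cis_sum_small_q:
  fixes S T :: "real set"
  assumes "sufficiently_large C R" "0 < \<bar>q\<bar>" "\<bar>q\<bar> < R powr (-1/1000) / 5"
    and "S \<subseteq> {0 .. R powr (-1/5)}" "T \<subseteq> {0 .. R powr (-1/5)}"
    and "separated (1 / sqrt R) S" "separated (1 / sqrt R) T"
  shows "norm (\<Sum>s\<in>S. \<Sum>t\<in>T. cis (R * (s * t + q * s\<^sup>2 * t\<^sup>2))) < R powr (3/5 - 1/1000) / \<bar>q\<bar>"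
proof -
  have "R \<ge> 1" using assms(1) by (simp add: sufficiently_large_def)
  have "norm (\<Sum>s\<in>S. \<Sum>t\<in>T. cis (R * (s * t + q * s\<^sup>2 * t\<^sup>2)))
      \<le> (\<Sum>s\<in>S. \<Sum>t\<in>T. norm (cis (R * (s * t + q * s\<^sup>2 * t\<^sup>2))))"
    by (rule order_trans[OF norm_sum sum_mono[OF norm_sum]])
  also have "\<dots> = real (card S) * real (card T)"
    by simp
  also have "\<dots> \<le> (R powr (-1/5) * sqrt R + 1)\<^sup>2"
    using card_separated_window_le[of R S] card_separated_window_le[of R T] assms(4-7) \<open>R \<ge> 1\<close>
    by (simp add: power2_eq_square mult_mono)
  also have "\<dots> \<le> R powr (3/5 - 1/1000) * (5 * R powr (1/1000))"
    using assms(1) \<open>R \<ge> 1\<close> by (simp add: sufficiently_large_def mult.left_commute flip: powr_add)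
  also have "\<dots> < R powr (3/5 - 1/1000) / \<bar>q\<bar>"
  proof -
    have "\<bar>q\<bar> * (5 * R powr (1/1000)) < R powr (-1/1000) * R powr (1/1000)"
      using assms(3) \<open>R \<ge> 1\<close> by (simp add: field_simps)
    also have "\<dots> = 1"
      using \<open>R \<ge> 1\<close> by (simp flip: powr_add)
    finally show ?thesis
      using assms(2) \<open>R \<ge> 1\<close> by (simp add: field_simps)
  qed
  finally show ?thesis .
qed

lemma moment_bound_mono:
  fixes a b N B B' x y E c :: real
  assumes "0 \<le> a" "a \<le> N" "0 \<le> b" "b \<le> N" "0 \<le> B" "B \<le> B'" "0 \<le> x" "x \<le> E" "0 \<le> y" "y \<le> E" "0 \<le> c"
  shows "a\<^sup>2 * b\<^sup>2 * (sqrt (B * x * y) + a\<^sup>2 * b\<^sup>2 * c) \<le> N^4 * (sqrt (B' * E\<^sup>2) + N^4 * c)"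
proof -
  have "a\<^sup>2 * b\<^sup>2 \<le> N\<^sup>2 * N\<^sup>2"
    using assms(1-4) by (intro mult_mono power_mono) auto
  hence ab: "a\<^sup>2 * b\<^sup>2 \<le> N^4"
    by (simp add: power2_eq_square power4_eq_xxxx mult.assoc)
  have "B * x * y \<le> B' * E\<^sup>2"
    using assms by (simp add: power2_eq_square mult.assoc mult_mono)
  hence "sqrt (B * x * y) + a\<^sup>2 * b\<^sup>2 * c \<le> sqrt (B' * E\<^sup>2) + N^4 * c"
    using ab assms(11) by (intro add_mono real_sqrt_le_mono mult_right_mono)
  thus ?thesis
    using ab assms(5,7,9,11) by (intro mult_mono) auto
qed

lemma norm_quadratic_cis_sum_large_q:
  fixes S T :: "real set"
  assumes "sufficiently_large C R" "R powr (-1/1000) / 5 \<le> \<bar>q\<bar>" "\<bar>q\<bar> \<le> C"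
    and "finite S" "finite T" "S \<subseteq> {0 .. R powr (-1/5)}" "T \<subseteq> {0 .. R powr (-1/5)}"
    and "separated (1 / sqrt R) S" "separated (1 / sqrt R) T"
  shows "norm (\<Sum>s\<in>S. \<Sum>t\<in>T. cis (R * (s * t + q * s\<^sup>2 * t\<^sup>2))) < R powr (3/5 - 1/1000) / \<bar>q\<bar>"
proof -
  define \<rho> K N where "\<rho> = R powr (-1/5)" and "K = R powr (1/100)" and "N = \<rho> * sqrt R + 1"
  define \<epsilon>1 \<epsilon>2 \<eta> where "\<epsilon>1 = 1 / (R * \<rho> * K)" and "\<epsilon>2 = 1 / (R * \<bar>q\<bar> * \<rho>\<^sup>2 * K)"
    and "\<eta> = 10 * R powr (1/1000) / (R * \<rho>\<^sup>2 * K) + 4 * \<rho> * \<epsilon>1"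
  define E where "E = energy_bound N (1 / sqrt R) (R powr (-4/15)) \<epsilon>1 \<eta>"
  have R: "R \<ge> 1" and X1: "R * \<rho>\<^sup>2 * K \<ge> 1"
    and X2: "R * (R powr (-1/1000) / 5) * \<rho>^4 * K \<ge> 1" and "2 * \<epsilon>1 < 1 / sqrt R"
    and final: "fourth_moment_bound C R < (R powr (3/5 - 1/1000) / C) ^ 4"
    using assms(1) by (simp_all add: sufficiently_large_def \<rho>_def K_def \<epsilon>1_def)
  have K: "K \<ge> 1"
    using R by (simp add: K_def ge_one_powr_ge_zero)
  have "\<rho> > 0" "\<bar>q\<bar> > 0"
    using R assms(2) by (auto simp: \<rho>_def intro: less_le_trans[of 0 "R powr (-1/1000) / 5"])
  have "R * (R powr (-1/1000) / 5) * \<rho>^4 * K \<le> R * \<bar>q\<bar> * \<rho>^4 * K"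
    using assms(2) R K \<open>\<rho> > 0\<close> by (intro mult_right_mono mult_left_mono) auto
  hence "R * \<bar>q\<bar> * \<rho>^4 * K \<ge> 1"
    using X2 by linarith
  have "\<epsilon>2 \<le> 5 * R powr (1/1000) / (R * \<rho>\<^sup>2 * K)"
  proof -
    have "1 \<le> \<bar>q\<bar> * (5 * R powr (1/1000))"
      using mult_right_mono[OF assms(2), of "5 * R powr (1/1000)"] R by (simp flip: powr_add)
    thus ?thesis
      using R K \<open>\<rho> > 0\<close> \<open>\<bar>q\<bar> > 0\<close> unfolding \<epsilon>2_def by (simp add: field_simps)
  qed
  hence "2 * \<epsilon>2 + 4 * \<rho> * \<epsilon>1 \<le> \<eta>"
    by (simp add: \<eta>_def)
  moreover have card: "real (card S) \<le> N" "real (card T) \<le> N"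
    using card_separated_window_le R assms(6-9) by (auto simp: N_def \<rho>_def)
  moreover have "0 \<le> \<epsilon>1" "0 \<le> \<eta>"
    using R K \<open>\<rho> > 0\<close> by (simp_all add: \<epsilon>1_def \<eta>_def)
  ultimately have energy: "real (card (energy_quadruples S \<epsilon>1 \<epsilon>2)) \<le> E" "real (card (energy_quadruples T \<epsilon>1 \<epsilon>2)) \<le> E"
    using card_energy_quadruples_le[of S \<rho> "1 / sqrt R" N "R powr (-4/15)" \<epsilon>1 \<eta> \<epsilon>2]
      card_energy_quadruples_le[of T \<rho> "1 / sqrt R" N "R powr (-4/15)" \<epsilon>1 \<eta> \<epsilon>2]
      assms(4-9) R \<open>2 * \<epsilon>1 < 1 / sqrt R\<close>
    by (simp_all add: E_def \<rho>_def)
  have "(norm (\<Sum>s\<in>S. \<Sum>t\<in>T. cis (R * (s * t + q * s\<^sup>2 * t\<^sup>2))))^4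
      \<le> (real (card S))\<^sup>2 * (real (card T))\<^sup>2 *
       (sqrt ((2 * pi * (R * \<rho>\<^sup>2) * K\<^sup>2 + 3) * (2 * pi * (R * \<bar>q\<bar> * \<rho>^4) * K\<^sup>2 + 3)
          * real (card (energy_quadruples S \<epsilon>1 \<epsilon>2)) * real (card (energy_quadruples T \<epsilon>1 \<epsilon>2)))
        + (real (card S))\<^sup>2 * (real (card T))\<^sup>2 * (3 / K))"
    unfolding \<epsilon>1_def \<epsilon>2_def
    by (rule norm_quadratic_cis_sum_pow4_le) (use assms(4-7) R K X1 \<open>\<rho> > 0\<close> \<open>\<bar>q\<bar> > 0\<close> \<open>R * \<bar>q\<bar> * \<rho>^4 * K \<ge> 1\<close> in \<open>auto simp: \<rho>_def\<close>)
  also have "\<dots> \<le> N^4 * (sqrt ((2 * pi * (R * \<rho>\<^sup>2) * K\<^sup>2 + 3) * (2 * pi * (R * C * \<rho>^4) * K\<^sup>2 + 3) * E\<^sup>2)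
      + N^4 * (3 / K))"
  proof (rule moment_bound_mono)
    have "2 * pi * (R * \<bar>q\<bar> * \<rho>^4) * K\<^sup>2 + 3 \<le> 2 * pi * (R * C * \<rho>^4) * K\<^sup>2 + 3"
      using assms(3) R \<open>\<rho> > 0\<close> by (intro add_right_mono mult_right_mono mult_left_mono) auto
    thus "(2 * pi * (R * \<rho>\<^sup>2) * K\<^sup>2 + 3) * (2 * pi * (R * \<bar>q\<bar> * \<rho>^4) * K\<^sup>2 + 3)
        \<le> (2 * pi * (R * \<rho>\<^sup>2) * K\<^sup>2 + 3) * (2 * pi * (R * C * \<rho>^4) * K\<^sup>2 + 3)"
      using R by (intro mult_left_mono) auto
  qed (use card energy R K in auto)
  also have "\<dots> = fourth_moment_bound C R"
    by (simp add: fourth_moment_bound_def Let_def \<rho>_def K_def N_def E_def \<epsilon>1_def \<eta>_def)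
  also note final
  also have "(R powr (3/5 - 1/1000) / C) ^ 4 \<le> (R powr (3/5 - 1/1000) / \<bar>q\<bar>) ^ 4"
    using assms(3) \<open>\<bar>q\<bar> > 0\<close> by (intro power_mono divide_left_mono) auto
  finally show ?thesis
    by (rule power_less_imp_less_base) simp
qed

lemma norm_quadratic_cis_sum_lt:
  fixes S T :: "real set"
  assumes "sufficiently_large C R" "0 < \<bar>q\<bar>" "\<bar>q\<bar> \<le> C"
    and "finite S" "finite T" "S \<subseteq> {0 .. R powr (-1/5)}" "T \<subseteq> {0 .. R powr (-1/5)}"
    and "separated (1 / sqrt R) S" "separated (1 / sqrt R) T"
  shows "norm (\<Sum>(s, t)\<in>S \<times> T. cis (R * (s * t + q * s\<^sup>2 * t\<^sup>2))) < R powr (3/5 - 1/1000) / \<bar>q\<bar>"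
  using norm_quadratic_cis_sum_small_q[OF assms(1,2) _ assms(6-9)]
    norm_quadratic_cis_sum_large_q[OF assms(1) _ assms(3-9)]
  by (cases "\<bar>q\<bar> < R powr (-1/1000) / 5") (simp_all add: sum.cartesian_product[symmetric])

theorem lemma5p1:
  shows "\<exists>\<kappa>1::real. \<kappa>1 > 0 \<and>
    (\<forall>C0::real. C0 > 0 \<longrightarrow>
      (\<exists>R0::real. \<forall>R::real. R \<ge> R0 \<longrightarrow>
        (\<forall>q::real. 0 < \<bar>q\<bar> \<and> \<bar>q\<bar> \<le> C0 \<longrightarrow>
          (\<forall>S T :: real set.
             finite S \<and> finite T \<and>
             S \<subseteq> {0 .. R powr (-1/5)} \<and> T \<subseteq> {0 .. R powr (-1/5)} \<and>
             separated (1 / sqrt R) S \<and> separated (1 / sqrt R) T \<longrightarrow>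
             norm (\<Sum>(s,t)\<in>S \<times> T. cis (R * (s * t + q * s^2 * t^2)))
               < R powr (3/5 - \<kappa>1) / \<bar>q\<bar>))))"
proof (rule exI[of _ "1/1000"], intro conjI allI impI)
  fix C0 :: real
  assume "C0 > 0"
  then obtain R0 where "\<And>R. R \<ge> R0 \<Longrightarrow> sufficiently_large C0 R"
    using eventually_sufficiently_large by (auto simp: eventually_at_top_linorder)
  thus "\<exists>R0. \<forall>R\<ge>R0. \<forall>q. 0 < \<bar>q\<bar> \<and> \<bar>q\<bar> \<le> C0 \<longrightarrow> (\<forall>S T. finite S \<and> finite T \<and>
      S \<subseteq> {0 .. R powr (-1/5)} \<and> T \<subseteq> {0 .. R powr (-1/5)} \<and>
      separated (1 / sqrt R) S \<and> separated (1 / sqrt R) T \<longrightarrow>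
      norm (\<Sum>(s,t)\<in>S \<times> T. cis (R * (s * t + q * s^2 * t^2))) < R powr (3/5 - 1/1000) / \<bar>q\<bar>)"
    using norm_quadratic_cis_sum_lt by blast
qed simp

end
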